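(* Every reflexive forest $T$ (a reflexive graph with no cycles), regarded as a simplicial complex, is cofibrant in the Thomason model structure on $\mathbf{Cpx}$. Furthermore, any inclusion of a tree into another tree is a Thomason cofibration.
   Context: A simplicial complex consists of a vertex set and a collection of nonempty finite subsets (simplices) containing all singletons and closed under nonempty subsets; maps are vertex functions preserving simplices; $\mathbf{Cpx}$ is the category. Reflexive graphs are the complexes whose simplices have at most two elements; a tree is a connected reflexive graph without cycles and a forest is a coproduct of trees. $\mathbf{\Delta}^n$ is the complex on $\{0,\dots,n\}$ with all nonempty subsets simplices, $\mathrm{Sing}(K)_n=\mathbf{Cpx}(\mathbf{\Delta}^n,K)$, $\mathrm{Ex}$ is the right adjoint of barycentric subdivision. Thomason model structure on $\mathbf{Cpx}$: $f$ is a weak equivalence iff $\mathrm{Sing}(f)$ is a weak homotopy equivalence, a fibration iff $\mathrm{Ex}^2\mathrm{Sing}(f)$ is a Kan fibration, and a cofibration iff it has the left lifting property against all trivial fibrations. *)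

theory Defs
  imports "HOL-Analysis.Analysis"
begin

type_synonym 'a cpx = "'a set \<times> 'a set set"

definition verts :: "'a cpx \<Rightarrow> 'a set" where "verts K = fst K"
definition simps :: "'a cpx \<Rightarrow> 'a set set" where "simps K = snd K"

definition is_cpx :: "'a cpx \<Rightarrow> bool" where
  "is_cpx K \<longleftrightarrow>
     (\<forall>s\<in>simps K. s \<noteq> {} \<and> finite s \<and> s \<subseteq> verts K) \<and>
     (\<forall>v\<in>verts K. {v} \<in> simps K) \<and>
     (\<forall>s\<in>simps K. \<forall>t. t \<noteq> {} \<longrightarrow> t \<subseteq> s \<longrightarrow> t \<in> simps K)"

definition cpx_map :: "'a cpx \<Rightarrow> 'b cpx \<Rightarrow> ('a \<Rightarrow> 'b) \<Rightarrow> bool" where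
  "cpx_map K L f \<longleftrightarrow> is_cpx K \<and> is_cpx L \<and>
     (\<forall>v\<in>verts K. f v \<in> verts L) \<and> (\<forall>s\<in>simps K. f ` s \<in> simps L)"

definition empty_cpx :: "'a cpx" where "empty_cpx = ({}, {})"

definition subcomplex :: "'a cpx \<Rightarrow> 'a cpx \<Rightarrow> bool" where
  "subcomplex A K \<longleftrightarrow> is_cpx A \<and> is_cpx K \<and> verts A \<subseteq> verts K \<and> simps A \<subseteq> simps K"

definition refl_graph :: "'a cpx \<Rightarrow> bool" where
  "refl_graph K \<longleftrightarrow> is_cpx K \<and> (\<forall>s\<in>simps K. card s \<le> 2)"

definition walk :: "'a cpx \<Rightarrow> 'a list \<Rightarrow> bool" where
  "walk K ws \<longleftrightarrow> ws \<noteq> [] \<and> set ws \<subseteq> verts K \<and>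
     (\<forall>i. Suc i < length ws \<longrightarrow> {ws ! i, ws ! Suc i} \<in> simps K)"

definition connected_cpx :: "'a cpx \<Rightarrow> bool" where
  "connected_cpx K \<longleftrightarrow> verts K \<noteq> {} \<and>
     (\<forall>u\<in>verts K. \<forall>v\<in>verts K. \<exists>ws. walk K ws \<and> hd ws = u \<and> last ws = v)"

definition has_cycle :: "'a cpx \<Rightarrow> bool" where
  "has_cycle K \<longleftrightarrow> (\<exists>cs. length cs \<ge> 3 \<and> distinct cs \<and> set cs \<subseteq> verts K \<and>
     (\<forall>i<length cs. {cs ! i, cs ! ((i + 1) mod length cs)} \<in> simps K))"

definition tree :: "'a cpx \<Rightarrow> bool" where
  "tree K \<longleftrightarrow> refl_graph K \<and> connected_cpx K \<and> \<not> has_cycle K"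

definition forest :: "'a cpx \<Rightarrow> bool" where
  "forest K \<longleftrightarrow> refl_graph K \<and> \<not> has_cycle K"

text \<open>A simplicial set: sets of n-simplices, and for each operator
  theta : [m] -> [n] (a monotone map) an action X_n -> X_m, written act m n theta.\<close>
type_synonym 'x sset = "(nat \<Rightarrow> 'x set) \<times> (nat \<Rightarrow> nat \<Rightarrow> (nat \<Rightarrow> nat) \<Rightarrow> 'x \<Rightarrow> 'x)"

definition cells :: "'x sset \<Rightarrow> nat \<Rightarrow> 'x set" where "cells X = fst X"
definition act :: "'x sset \<Rightarrow> nat \<Rightarrow> nat \<Rightarrow> (nat \<Rightarrow> nat) \<Rightarrow> 'x \<Rightarrow> 'x" where "act X = snd X"

definition simp_op :: "nat \<Rightarrow> nat \<Rightarrow> (nat \<Rightarrow> nat) \<Rightarrow> bool" where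
  "simp_op m n \<theta> \<longleftrightarrow> (\<forall>i\<le>m. \<theta> i \<le> n) \<and> (\<forall>i j. i \<le> j \<longrightarrow> j \<le> m \<longrightarrow> \<theta> i \<le> \<theta> j)"

definition sset_map :: "'x sset \<Rightarrow> 'y sset \<Rightarrow> (nat \<Rightarrow> 'x \<Rightarrow> 'y) \<Rightarrow> bool" where
  "sset_map X Y f \<longleftrightarrow> (\<forall>n. \<forall>x\<in>cells X n. f n x \<in> cells Y n) \<and>
     (\<forall>m n \<theta>. simp_op m n \<theta> \<longrightarrow> (\<forall>x\<in>cells X n. f m (act X m n \<theta> x) = act Y m n \<theta> (f n x)))"

definition coface :: "nat \<Rightarrow> nat \<Rightarrow> nat" where
  "coface i j = (if j < i then j else Suc j)"

definition face :: "'x sset \<Rightarrow> nat \<Rightarrow> nat \<Rightarrow> 'x \<Rightarrow> 'x" where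
  "face X n i x = act X (n - 1) n (coface i) x"

text \<open>Kan fibration: right lifting against all horn inclusions, written out via
  compatible families of faces (the standard description of maps out of a horn).\<close>
definition kan_fibration :: "'x sset \<Rightarrow> 'y sset \<Rightarrow> (nat \<Rightarrow> 'x \<Rightarrow> 'y) \<Rightarrow> bool" where
  "kan_fibration X Y p \<longleftrightarrow> sset_map X Y p \<and>
     (\<forall>n k (xs :: nat \<Rightarrow> 'x) y. 1 \<le> n \<longrightarrow> k \<le> n \<longrightarrow>
        (\<forall>i\<le>n. i \<noteq> k \<longrightarrow> xs i \<in> cells X (n - 1)) \<longrightarrow>
        (\<forall>i j. i < j \<longrightarrow> j \<le> n \<longrightarrow> i \<noteq> k \<longrightarrow> j \<noteq> k \<longrightarrow>
            face X (n - 1) i (xs j) = face X (n - 1) (j - 1) (xs i)) \<longrightarrow>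
        y \<in> cells Y n \<longrightarrow>
        (\<forall>i\<le>n. i \<noteq> k \<longrightarrow> face Y n i y = p (n - 1) (xs i)) \<longrightarrow>
        (\<exists>z\<in>cells X n. p n z = y \<and> (\<forall>i\<le>n. i \<noteq> k \<longrightarrow> face X n i z = xs i)))"

text \<open>An n-simplex of Sing(K) is a map Delta^n -> K, i.e. a list of n+1 vertices
  whose set of values is a simplex.\<close>
definition Sing :: "'a cpx \<Rightarrow> 'a list sset" where
  "Sing K = ((\<lambda>n. {xs. length xs = Suc n \<and> set xs \<in> simps K}),
             (\<lambda>m n \<theta> xs. map (\<lambda>j. xs ! \<theta> j) [0..<Suc m]))"

definition Sing_map :: "('a \<Rightarrow> 'b) \<Rightarrow> nat \<Rightarrow> 'a list \<Rightarrow> 'b list" where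
  "Sing_map f n xs = map f xs"

text \<open>sd Delta^n is the nerve of the poset of nonempty subsets of [n]; its k-simplices
  are weakly increasing chains of length k+1.\<close>
definition chains :: "nat \<Rightarrow> nat set list set" where
  "chains n = {c. c \<noteq> [] \<and> (\<forall>s\<in>set c. s \<noteq> {} \<and> s \<subseteq> {0..n}) \<and> sorted_wrt (\<subseteq>) c}"

text \<open>Ex(X)_n = simplicial maps sd Delta^n -> X.\<close>
definition Ex :: "'x sset \<Rightarrow> (nat set list \<Rightarrow> 'x) sset" where
  "Ex X = ((\<lambda>n. {g. (\<forall>c\<in>chains n. g c \<in> cells X (length c - 1)) \<and>
                    (\<forall>c\<in>chains n. \<forall>k \<theta>. simp_op k (length c - 1) \<theta> \<longrightarrow>
                        g (map (\<lambda>j. c ! \<theta> j) [0..<Suc k]) = act X k (length c - 1) \<theta> (g c)) \<and>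
                    (\<forall>c. c \<notin> chains n \<longrightarrow> g c = undefined)}),
           (\<lambda>m n \<theta> g. (\<lambda>c. if c \<in> chains m then g (map (\<lambda>s. \<theta> ` s) c) else undefined)))"

definition Ex_map :: "(nat \<Rightarrow> 'x \<Rightarrow> 'y) \<Rightarrow> nat \<Rightarrow> (nat set list \<Rightarrow> 'x) \<Rightarrow> (nat set list \<Rightarrow> 'y)" where
  "Ex_map f n g = (\<lambda>c. if c \<in> chains n then f (length c - 1) (g c) else undefined)"

definition std_simplex :: "nat \<Rightarrow> (nat \<Rightarrow> real) set" where
  "std_simplex n = {t. (\<forall>i. 0 \<le> t i) \<and> (\<forall>i>n. t i = 0) \<and> (\<Sum>i\<le>n. t i) = 1}"

definition push :: "nat \<Rightarrow> (nat \<Rightarrow> nat) \<Rightarrow> (nat \<Rightarrow> real) \<Rightarrow> nat \<Rightarrow> real" where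
  "push m \<theta> t j = (\<Sum>i\<in>{i. i \<le> m \<and> \<theta> i = j}. t i)"

definition real_pts :: "'x sset \<Rightarrow> (nat \<times> 'x \<times> (nat \<Rightarrow> real)) set" where
  "real_pts X = {(n, x, t). x \<in> cells X n \<and> t \<in> std_simplex n}"

definition real_gen :: "'x sset \<Rightarrow> ((nat \<times> 'x \<times> (nat \<Rightarrow> real)) \<times> (nat \<times> 'x \<times> (nat \<Rightarrow> real))) set" where
  "real_gen X = {((m, act X m n \<theta> x, t), (n, x, push m \<theta> t)) | m n \<theta> x t.
                   simp_op m n \<theta> \<and> x \<in> cells X n \<and> t \<in> std_simplex m}"

definition real_rel :: "'x sset \<Rightarrow> ((nat \<times> 'x \<times> (nat \<Rightarrow> real)) \<times> (nat \<times> 'x \<times> (nat \<Rightarrow> real))) set" where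
  "real_rel X = (real_gen X \<union> (real_gen X)\<inverse> \<union> Id_on (real_pts X))\<^sup>*"

definition real_carrier :: "'x sset \<Rightarrow> (nat \<times> 'x \<times> (nat \<Rightarrow> real)) set set" where
  "real_carrier X = real_pts X // real_rel X"

definition real_open :: "'x sset \<Rightarrow> (nat \<times> 'x \<times> (nat \<Rightarrow> real)) set set \<Rightarrow> bool" where
  "real_open X U \<longleftrightarrow> U \<subseteq> real_carrier X \<and>
     (\<forall>n. \<forall>x\<in>cells X n. openin (subtopology (powertop_real UNIV) (std_simplex n))
                             {t \<in> std_simplex n. real_rel X `` {(n, x, t)} \<in> U})"

lemma istopology_real_open: "istopology (real_open X)"
  unfolding istopology_def
proof (intro conjI allI impI)
  fix S T assume S: "real_open X S" and T: "real_open X T"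
  show "real_open X (S \<inter> T)"
    unfolding real_open_def
  proof (intro conjI ballI allI)
    show "S \<inter> T \<subseteq> real_carrier X" using S unfolding real_open_def by blast
    fix n x assume x: "x \<in> cells X n"
    have "{t \<in> std_simplex n. real_rel X `` {(n, x, t)} \<in> S \<inter> T} =
          {t \<in> std_simplex n. real_rel X `` {(n, x, t)} \<in> S} \<inter>
          {t \<in> std_simplex n. real_rel X `` {(n, x, t)} \<in> T}" by blast
    then show "openin (subtopology (powertop_real UNIV) (std_simplex n))
                 {t \<in> std_simplex n. real_rel X `` {(n, x, t)} \<in> S \<inter> T}"
      using S T x unfolding real_open_def by (simp add: openin_Int)
  qed
next
  fix K assume K: "\<forall>S\<in>K. real_open X S"
  show "real_open X (\<Union>K)"
    unfolding real_open_def
  proof (intro conjI ballI allI)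
    show "\<Union>K \<subseteq> real_carrier X" using K unfolding real_open_def by blast
    fix n x assume x: "x \<in> cells X n"
    have "{t \<in> std_simplex n. real_rel X `` {(n, x, t)} \<in> \<Union>K} =
          \<Union>((\<lambda>S. {t \<in> std_simplex n. real_rel X `` {(n, x, t)} \<in> S}) ` K)" by blast
    then show "openin (subtopology (powertop_real UNIV) (std_simplex n))
                 {t \<in> std_simplex n. real_rel X `` {(n, x, t)} \<in> \<Union>K}"
      using K x unfolding real_open_def by (auto intro!: openin_Union)
  qed
qed

definition realize :: "'x sset \<Rightarrow> (nat \<times> 'x \<times> (nat \<Rightarrow> real)) set topology" where
  "realize X = topology (real_open X)"

definition realize_map :: "'y sset \<Rightarrow> (nat \<Rightarrow> 'x \<Rightarrow> 'y) \<Rightarrow>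
    (nat \<times> 'x \<times> (nat \<Rightarrow> real)) set \<Rightarrow> (nat \<times> 'y \<times> (nat \<Rightarrow> real)) set" where
  "realize_map Y f P = (\<Union>(n, x, t)\<in>P. real_rel Y `` {(n, f n x, t)})"

definition sphere_base :: "nat \<Rightarrow> real" where
  "sphere_base i = (if i = 0 then 1 else 0)"

text \<open>f induces a bijection on path components and, for all n >= 1 and all base points,
  a bijection (hence isomorphism) pi_n(X,x0) -> pi_n(Y, f x0), where pi_n is the set of
  based homotopy classes of based maps S^n -> X.\<close>
definition weak_homotopy_equivalence :: "'a topology \<Rightarrow> 'b topology \<Rightarrow> ('a \<Rightarrow> 'b) \<Rightarrow> bool" where
  "weak_homotopy_equivalence X Y f \<longleftrightarrow> continuous_map X Y f \<and>
     (\<forall>y\<in>topspace Y. \<exists>x\<in>topspace X. path_component_of Y (f x) y) \<and>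
     (\<forall>x1\<in>topspace X. \<forall>x2\<in>topspace X. path_component_of Y (f x1) (f x2) \<longrightarrow> path_component_of X x1 x2) \<and>
     (\<forall>n\<ge>1. \<forall>x0\<in>topspace X.
        (\<forall>h. continuous_map (nsphere n) Y h \<and> h sphere_base = f x0 \<longrightarrow>
           (\<exists>g. continuous_map (nsphere n) X g \<and> g sphere_base = x0 \<and>
                homotopic_with (\<lambda>k. k sphere_base = f x0) (nsphere n) Y (f \<circ> g) h)) \<and>
        (\<forall>g1 g2. continuous_map (nsphere n) X g1 \<and> g1 sphere_base = x0 \<and>
                 continuous_map (nsphere n) X g2 \<and> g2 sphere_base = x0 \<and>
                 homotopic_with (\<lambda>k. k sphere_base = f x0) (nsphere n) Y (f \<circ> g1) (f \<circ> g2) \<longrightarrow>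
                 homotopic_with (\<lambda>k. k sphere_base = x0) (nsphere n) X g1 g2))"

definition sset_weq :: "'x sset \<Rightarrow> 'y sset \<Rightarrow> (nat \<Rightarrow> 'x \<Rightarrow> 'y) \<Rightarrow> bool" where
  "sset_weq X Y f \<longleftrightarrow> sset_map X Y f \<and>
     weak_homotopy_equivalence (realize X) (realize Y) (realize_map Y f)"

definition thomason_weq :: "'a cpx \<Rightarrow> 'b cpx \<Rightarrow> ('a \<Rightarrow> 'b) \<Rightarrow> bool" where
  "thomason_weq K L f \<longleftrightarrow> cpx_map K L f \<and> sset_weq (Sing K) (Sing L) (Sing_map f)"

definition thomason_fib :: "'a cpx \<Rightarrow> 'b cpx \<Rightarrow> ('a \<Rightarrow> 'b) \<Rightarrow> bool" where
  "thomason_fib K L f \<longleftrightarrow> cpx_map K L f \<and>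
     kan_fibration (Ex (Ex (Sing K))) (Ex (Ex (Sing L))) (Ex_map (Ex_map (Sing_map f)))"

definition thomason_trivial_fib :: "'a cpx \<Rightarrow> 'b cpx \<Rightarrow> ('a \<Rightarrow> 'b) \<Rightarrow> bool" where
  "thomason_trivial_fib K L f \<longleftrightarrow> thomason_fib K L f \<and> thomason_weq K L f"

text \<open>i : A -> T has the left lifting property against p : E -> B.  (Maps of complexes
  are identified when they agree on vertices.)\<close>
definition has_llp :: "'a cpx \<Rightarrow> 'b cpx \<Rightarrow> ('a \<Rightarrow> 'b) \<Rightarrow> 'c cpx \<Rightarrow> 'd cpx \<Rightarrow> ('c \<Rightarrow> 'd) \<Rightarrow> bool" where
  "has_llp A T i E B p \<longleftrightarrow>
     (\<forall>u g. cpx_map A E u \<longrightarrow> cpx_map T B g \<longrightarrow> (\<forall>v\<in>verts A. p (u v) = g (i v)) \<longrightarrow>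
        (\<exists>h. cpx_map T E h \<and> (\<forall>v\<in>verts A. h (i v) = u v) \<and> (\<forall>v\<in>verts T. p (h v) = g v)))"

end

theory Submission
  imports Defs
begin

text \<open>
  A Thomason trivial fibration \<open>p : E \<rightarrow> B\<close> lifts edges and is surjective on vertices.
  Edges: a horn \<open>\<Lambda>\<^sup>1\<^sub>0\<close> in \<open>Ex\<^sup>2 Sing E\<close> at a vertex \<open>e\<close>, lying over an edge \<open>{p e, b'}\<close>
  of \<open>B\<close> viewed in \<open>Ex\<^sup>2 Sing B\<close>, has a filler, and evaluating the filler on the first
  corner of the twice subdivided 1-simplex gives an edge \<open>{e, e'}\<close> of \<open>E\<close> over \<open>{p e, b'}\<close>.
  Vertices: the points of \<open>|Sing B|\<close> whose simplex has a vertex joined to \<open>b\<close> form an open and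
  closed set, so by surjectivity on \<open>\<pi>\<^sub>0\<close> some vertex of \<open>E\<close> maps to a vertex joined to \<open>b\<close>;
  lifting a walk edge by edge then reaches \<open>b\<close> itself.

  Given these two properties, every map from a forest \<open>R\<close> to \<open>B\<close> lifts to \<open>E\<close>, extending a
  prescribed lift on a full, walk-closed subcomplex.  Take a maximal partial lift with
  walk-closed domain (Zorn).  A missing vertex is either the far end of an edge leaving the
  domain, lifted along that edge (having no cycles, the forest has no second edge from it
  into the domain), or lies in a component disjoint from the domain and is lifted by
  surjectivity.  The empty complex in a forest and a subtree of a tree are such subcomplexes.
\<close>

section \<open>Walks, cycles and forests\<close>

lemma cpx_simplex_subset: "is_cpx K \<Longrightarrow> s \<in> simps K \<Longrightarrow> t \<noteq> {} \<Longrightarrow> t \<subseteq> s \<Longrightarrow> t \<in> simps K"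
  unfolding is_cpx_def by (elim conjE) (drule bspec, assumption, blast)

lemma cpx_simplex_verts: "is_cpx K \<Longrightarrow> s \<in> simps K \<Longrightarrow> s \<subseteq> verts K"
  unfolding is_cpx_def by blast

lemma cpx_vertex_simplex: "is_cpx K \<Longrightarrow> v \<in> verts K \<Longrightarrow> {v} \<in> simps K"
  unfolding is_cpx_def by blast

definition joined :: "'a cpx \<Rightarrow> 'a \<Rightarrow> 'a \<Rightarrow> bool" where
  "joined K u v \<longleftrightarrow> (\<exists>ws. walk K ws \<and> hd ws = u \<and> last ws = v)"

lemma walk_singleton_iff [simp]: "walk K [v] \<longleftrightarrow> v \<in> verts K"
  unfolding walk_def by auto

lemma walk_Cons_Cons_iff [simp]:
  "walk K (u # v # ws) \<longleftrightarrow> u \<in> verts K \<and> {u, v} \<in> simps K \<and> walk K (v # ws)"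
  unfolding walk_def by (auto simp: less_Suc_eq_0_disj)

lemma walk_Nil [simp]: "\<not> walk K []"
  unfolding walk_def by auto

lemma walk_append_iff:
  assumes "xs \<noteq> []" "ys \<noteq> []"
  shows "walk K (xs @ ys) \<longleftrightarrow> walk K xs \<and> walk K ys \<and> {last xs, hd ys} \<in> simps K"
  using assms
proof (induction xs rule: induct_list012)
  case (2 x)
  then show ?case by (cases ys) auto
qed auto

lemma walk_rev: "walk K ws \<Longrightarrow> walk K (rev ws)"
proof (induction ws)
  case (Cons u ws)
  show ?case
  proof (cases ws)
    case (Cons v ws')
    then have "walk K ((rev ws' @ [v]) @ [u])"
      using Cons.IH Cons.prems by (subst walk_append_iff) (auto simp: insert_commute)
    then show ?thesis using Cons by simp
  qed (use Cons.prems in simp)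
qed simp

lemma walk_verts: "walk K ws \<Longrightarrow> set ws \<subseteq> verts K"
  unfolding walk_def by auto

lemma walk_mono: "walk S ws \<Longrightarrow> subcomplex S R \<Longrightarrow> walk R ws"
  unfolding walk_def subcomplex_def by blast

lemma joined_refl: "v \<in> verts K \<Longrightarrow> joined K v v"
  unfolding joined_def by (intro exI[of _ "[v]"]) simp

lemma joined_sym: "joined K u v \<Longrightarrow> joined K v u"
  unfolding joined_def by (metis hd_rev last_rev walk_rev)

lemma joined_trans:
  assumes "joined K u v" "joined K v w"
  shows "joined K u w"
proof -
  obtain xs ys where xs: "walk K xs" "hd xs = u" "last xs = v"
    and ys: "walk K ys" "hd ys = v" "last ys = w"
    using assms unfolding joined_def by blast
  have "xs \<noteq> []" using xs(1) by auto
  show ?thesis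
  proof (cases "tl ys")
    case Nil
    then show ?thesis using xs ys unfolding joined_def by (cases ys) auto
  next
    case (Cons c cs)
    then have "ys = v # c # cs" using ys by (cases ys) auto
    then have "walk K (xs @ c # cs)" using xs ys by (subst walk_append_iff) auto
    then show ?thesis unfolding joined_def using xs ys \<open>ys = v # c # cs\<close> \<open>xs \<noteq> []\<close>
      by (intro exI[of _ "xs @ c # cs"]) auto
  qed
qed

lemma joined_in_simplex:
  assumes "is_cpx K" "s \<in> simps K" "u \<in> s" "v \<in> s"
  shows "joined K u v"
proof -
  have "{u, v} \<in> simps K" "u \<in> verts K" "v \<in> verts K"
    using assms cpx_simplex_subset[of K s "{u, v}"] cpx_simplex_verts[of K s] by auto
  then show ?thesis unfolding joined_def by (intro exI[of _ "[u, v]"]) auto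
qed

lemma walk_distinct_subwalk:
  "walk K ws \<Longrightarrow> \<exists>ds. walk K ds \<and> distinct ds \<and> hd ds = hd ws \<and> last ds = last ws \<and> set ds \<subseteq> set ws"
proof (induction ws rule: induct_list012)
  case (2 v)
  then show ?case by (intro exI[of _ "[v]"]) auto
next
  case (3 u v ws)
  then obtain ds where ds: "walk K ds" "distinct ds" "hd ds = v" "last ds = last (v # ws)"
      "set ds \<subseteq> set (v # ws)"
    by auto
  then obtain d ds' where ds_Cons: "ds = d # ds'" by (cases ds) auto
  show ?case
  proof (cases "u \<in> set ds")
    case True
    then obtain as bs where ds_split: "ds = as @ u # bs" by (meson split_list)
    then have "walk K (u # bs)"
      using ds(1) by (cases "as = []") (auto simp: walk_append_iff)
    moreover have "last (u # bs) = last (u # v # ws)" using ds ds_split by (cases bs) auto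
    ultimately show ?thesis using ds ds_split by (intro exI[of _ "u # bs"]) auto
  next
    case False
    have "walk K (u # ds)" using 3 ds ds_Cons by auto
    then show ?thesis using False ds ds_Cons by (intro exI[of _ "u # ds"]) auto
  qed
qed auto

lemma has_cycleI:
  assumes "walk K cs" "distinct cs" "length cs \<ge> 3" "{last cs, hd cs} \<in> simps K"
  shows "has_cycle K"
  unfolding has_cycle_def
proof (intro exI[of _ cs] conjI allI impI)
  fix i assume i: "i < length cs"
  show "{cs ! i, cs ! ((i + 1) mod length cs)} \<in> simps K"
  proof (cases "Suc i < length cs")
    case True
    then show ?thesis using assms(1) unfolding walk_def by auto
  next
    case False
    then have "Suc i = length cs" using i by simp
    then have "i = length cs - 1" "(i + 1) mod length cs = 0" by auto
    moreover have "cs \<noteq> []" using assms(3) by auto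
    ultimately show ?thesis using assms(4) by (simp add: last_conv_nth hd_conv_nth insert_commute)
  qed
qed (use assms walk_verts[OF assms(1)] in auto)

lemma acyclic_distinct_walk_length:
  assumes "\<not> has_cycle K" "walk K ds" "distinct ds" "{last ds, hd ds} \<in> simps K"
  shows "length ds \<le> 2"
  using has_cycleI[OF assms(2-3) _ assms(4)] assms(1) by linarith

lemma acyclic_common_neighbour:
  assumes "is_cpx K" "\<not> has_cycle K" "walk K ws" "y \<notin> set ws"
    and "{y, hd ws} \<in> simps K" "{last ws, y} \<in> simps K"
  shows "hd ws = last ws"
proof -
  obtain ds where ds: "walk K ds" "distinct ds" "hd ds = hd ws" "last ds = last ws"
      "set ds \<subseteq> set ws"
    using walk_distinct_subwalk[OF assms(3)] by blast
  obtain d ds' where ds_Cons: "ds = d # ds'" using ds(1) by (cases ds) auto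
  have "y \<in> verts K" using cpx_simplex_verts[OF assms(1,5)] by simp
  then have "walk K (y # ds)" using ds assms(5) ds_Cons by simp
  moreover have "distinct (y # ds)" using ds assms(4) by auto
  moreover have "{last (y # ds), hd (y # ds)} \<in> simps K" using ds assms(6) ds_Cons by simp
  ultimately have "length (y # ds) \<le> 2" by (rule acyclic_distinct_walk_length[OF assms(2)])
  then have "ds' = []" using ds_Cons by simp
  then show ?thesis using ds ds_Cons by simp
qed

lemma walk_exit_edge:
  "walk K ws \<Longrightarrow> hd ws \<in> D \<Longrightarrow> last ws \<notin> D \<Longrightarrow> \<exists>x\<in>D. \<exists>y. y \<notin> D \<and> {x, y} \<in> simps K"
proof (induction ws rule: induct_list012)
  case (3 u v ws)
  then show ?case by (cases "v \<in> D") auto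
qed auto

lemma refl_graph_simplex_pair:
  assumes "refl_graph K" "s \<in> simps K"
  shows "\<exists>x y. s = {x, y}"
proof -
  have "s \<noteq> {}" "finite s" "card s \<le> 2"
    using assms unfolding refl_graph_def is_cpx_def by auto
  then have "card s = 1 \<or> card s = 2"
    by (metis One_nat_def card_gt_0_iff le_SucE numeral_2_eq_2 Suc_leI le_antisym)
  then show ?thesis by (metis One_nat_def card_1_singleton_iff card_2_iff insert_absorb2)
qed

lemma connected_subcomplex_edge:
  assumes "connected_cpx S" "subcomplex S R" "\<not> has_cycle R"
    and "a \<in> verts S" "b \<in> verts S" "{a, b} \<in> simps R"
  shows "{a, b} \<in> simps S"
proof -
  obtain ws where "walk S ws" "hd ws = a" "last ws = b"
    using assms(1,4,5) unfolding connected_cpx_def by blast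
  then obtain ds where ds: "walk S ds" "distinct ds" "hd ds = a" "last ds = b"
    using walk_distinct_subwalk by metis
  have "length ds \<le> 2"
    using acyclic_distinct_walk_length[OF assms(3) walk_mono[OF ds(1) assms(2)] ds(2)] ds assms(6)
    by (simp add: insert_commute)
  then consider "ds = [a]" "a = b" | "ds = [a, b]"
    using ds by (auto simp: numeral_2_eq_2 le_Suc_eq length_Suc_conv)
  then show ?thesis
  proof cases
    case 1
    then show ?thesis
      using ds(1) assms(2) cpx_vertex_simplex[of S a] unfolding subcomplex_def by auto
  qed (use ds(1) in simp)
qed

section \<open>Lifting maps from forests\<close>

definition edge_lifting :: "'c cpx \<Rightarrow> 'd cpx \<Rightarrow> ('c \<Rightarrow> 'd) \<Rightarrow> bool" where
  "edge_lifting E B p \<longleftrightarrow>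
     (\<forall>e\<in>verts E. \<forall>b. {p e, b} \<in> simps B \<longrightarrow> (\<exists>e'\<in>verts E. p e' = b \<and> {e, e'} \<in> simps E))"

lemma edge_liftingD:
  "edge_lifting E B p \<Longrightarrow> e \<in> verts E \<Longrightarrow> {p e, b} \<in> simps B \<Longrightarrow>
     \<exists>e'\<in>verts E. p e' = b \<and> {e, e'} \<in> simps E"
  unfolding edge_lifting_def by blast

lemma edge_lifting_walk:
  assumes "edge_lifting E B p"
  shows "walk B ws \<Longrightarrow> e \<in> verts E \<Longrightarrow> p e = hd ws \<Longrightarrow> last ws \<in> p ` verts E"
proof (induction ws arbitrary: e rule: induct_list012)
  case (3 u v ws)
  then have "{p e, v} \<in> simps B" by simp
  then obtain e' where "e' \<in> verts E" "p e' = v"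
    using assms "3.prems"(2) unfolding edge_lifting_def by blast
  then show ?case using "3.IH"(2) "3.prems" by simp
qed auto

lemma edge_lifting_joined:
  assumes "edge_lifting E B p" "e \<in> verts E" "joined B (p e) b"
  shows "b \<in> p ` verts E"
proof -
  obtain ws where ws: "walk B ws" "hd ws = p e" "last ws = b"
    using assms(3) unfolding joined_def by blast
  then have "last ws \<in> p ` verts E" using edge_lifting_walk[OF assms(1) ws(1) assms(2)] by simp
  then show ?thesis using \<open>last ws = b\<close> by simp
qed

definition walk_closed :: "'a cpx \<Rightarrow> 'a set \<Rightarrow> bool" where
  "walk_closed K D \<longleftrightarrow>
     (\<forall>a\<in>D. \<forall>b\<in>D. joined K a b \<longrightarrow> (\<exists>ws. walk K ws \<and> hd ws = a \<and> last ws = b \<and> set ws \<subseteq> D))"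

text \<open>Partial lifts are handled through their graphs, so that Zorn's lemma applies to unions of
  chains.  Keeping the domain walk-closed ensures that in a forest a vertex outside the domain
  has at most one neighbour inside it.\<close>
definition partial_lift :: "'a cpx \<Rightarrow> 'c cpx \<Rightarrow> ('c \<Rightarrow> 'd) \<Rightarrow> ('a \<Rightarrow> 'd) \<Rightarrow> ('a \<times> 'c) set \<Rightarrow> bool" where
  "partial_lift R E p g F \<longleftrightarrow> F \<subseteq> verts R \<times> verts E \<and> single_valued F \<and> (\<forall>(x, e)\<in>F. p e = g x) \<and>
     (\<forall>(x, e)\<in>F. \<forall>(y, e')\<in>F. {x, y} \<in> simps R \<longrightarrow> {e, e'} \<in> simps E) \<and> walk_closed R (Domain F)"

lemma partial_liftI:
  assumes "F \<subseteq> verts R \<times> verts E" "single_valued F" "\<And>x e. (x, e) \<in> F \<Longrightarrow> p e = g x"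
    and "\<And>x e y e'. (x, e) \<in> F \<Longrightarrow> (y, e') \<in> F \<Longrightarrow> {x, y} \<in> simps R \<Longrightarrow> {e, e'} \<in> simps E"
    and "walk_closed R (Domain F)"
  shows "partial_lift R E p g F"
  using assms unfolding partial_lift_def by blast

lemma partial_liftD:
  assumes "partial_lift R E p g F"
  shows "F \<subseteq> verts R \<times> verts E" "single_valued F" "(x, e) \<in> F \<Longrightarrow> p e = g x"
    and "(x, e) \<in> F \<Longrightarrow> (y, e') \<in> F \<Longrightarrow> {x, y} \<in> simps R \<Longrightarrow> {e, e'} \<in> simps E"
    and "walk_closed R (Domain F)"
  using assms unfolding partial_lift_def by blast+

lemma walk_closedD:
  "walk_closed K D \<Longrightarrow> a \<in> D \<Longrightarrow> b \<in> D \<Longrightarrow> joined K a b \<Longrightarrow>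
     \<exists>ws. walk K ws \<and> hd ws = a \<and> last ws = b \<and> set ws \<subseteq> D"
  unfolding walk_closed_def by blast

lemma partial_lift_Union:
  assumes lifts: "\<And>F. F \<in> C \<Longrightarrow> partial_lift R E p g F" and chain: "\<forall>F\<in>C. \<forall>G\<in>C. F \<subseteq> G \<or> G \<subseteq> F"
  shows "partial_lift R E p g (\<Union>C)"
proof (rule partial_liftI)
  have common: "\<exists>F\<in>C. a \<in> F \<and> b \<in> F" if "a \<in> \<Union>C" "b \<in> \<Union>C" for a b
    using that chain by blast
  show "\<Union>C \<subseteq> verts R \<times> verts E" using partial_liftD(1)[OF lifts] by blast
  show "single_valued (\<Union>C)"
    unfolding single_valued_def
  proof (intro allI impI)
    fix x y z assume "(x, y) \<in> \<Union>C" "(x, z) \<in> \<Union>C"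
    then obtain F where "F \<in> C" "(x, y) \<in> F" "(x, z) \<in> F" using common by blast
    then show "y = z" using partial_liftD(2)[OF lifts] unfolding single_valued_def by blast
  qed
  show "p e = g x" if "(x, e) \<in> \<Union>C" for x e
    using that partial_liftD(3)[OF lifts] by blast
  show "{e, e'} \<in> simps E"
    if xe: "(x, e) \<in> \<Union>C" and ye': "(y, e') \<in> \<Union>C" and xy: "{x, y} \<in> simps R" for x e y e'
  proof -
    obtain F where "F \<in> C" "(x, e) \<in> F" "(y, e') \<in> F" using common[OF xe ye'] by blast
    then show ?thesis using partial_liftD(4)[OF lifts] xy by blast
  qed
  show "walk_closed R (Domain (\<Union>C))"
    unfolding walk_closed_def
  proof (intro ballI impI)
    fix a b assume "a \<in> Domain (\<Union>C)" "b \<in> Domain (\<Union>C)" "joined R a b"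
    then obtain F ea eb where F: "F \<in> C" "(a, ea) \<in> F" "(b, eb) \<in> F"
      using common by blast
    then obtain ws where "walk R ws" "hd ws = a" "last ws = b" "set ws \<subseteq> Domain F"
      using walk_closedD[OF partial_liftD(5)[OF lifts]] \<open>joined R a b\<close> by blast
    moreover have "Domain F \<subseteq> Domain (\<Union>C)" using F(1) by blast
    ultimately show "\<exists>ws. walk R ws \<and> hd ws = a \<and> last ws = b \<and> set ws \<subseteq> Domain (\<Union>C)" by blast
  qed
qed

lemma partial_lift_insert:
  assumes F: "partial_lift R E p g F" and "is_cpx E"
    and y: "y \<in> verts R" "y \<notin> Domain F" and e: "e \<in> verts E" "p e = g y"
    and edges: "\<And>z f. (z, f) \<in> F \<Longrightarrow> {y, z} \<in> simps R \<Longrightarrow> {e, f} \<in> simps E"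
    and walks: "\<And>b. b \<in> Domain F \<Longrightarrow> joined R y b \<Longrightarrow>
                  \<exists>ws. walk R ws \<and> hd ws = y \<and> last ws = b \<and> set ws \<subseteq> insert y (Domain F)"
  shows "partial_lift R E p g (insert (y, e) F)"
proof (rule partial_liftI)
  show "insert (y, e) F \<subseteq> verts R \<times> verts E" using partial_liftD(1)[OF F] y e by blast
  show "single_valued (insert (y, e) F)"
    using partial_liftD(2)[OF F] y(2) unfolding single_valued_def by blast
  show "p e' = g x" if "(x, e') \<in> insert (y, e) F" for x e'
    using that e partial_liftD(3)[OF F] by blast
  have "{e, e} \<in> simps E" using cpx_vertex_simplex[OF \<open>is_cpx E\<close> e(1)] by simp
  moreover have "{f, e} \<in> simps E" if "(z, f) \<in> F" "{z, y} \<in> simps R" for z f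
    using edges[OF that(1)] that(2) by (simp add: insert_commute)
  ultimately show "{e1, e2} \<in> simps E"
    if "(x1, e1) \<in> insert (y, e) F" "(x2, e2) \<in> insert (y, e) F" "{x1, x2} \<in> simps R"
    for x1 e1 x2 e2
    using that edges partial_liftD(4)[OF F] by auto
  show "walk_closed R (Domain (insert (y, e) F))"
    unfolding Domain_insert walk_closed_def
  proof (intro ballI impI)
    fix a b assume a: "a \<in> insert y (Domain F)" and b: "b \<in> insert y (Domain F)"
      and ab: "joined R a b"
    show "\<exists>ws. walk R ws \<and> hd ws = a \<and> last ws = b \<and> set ws \<subseteq> insert y (Domain F)"
    proof (cases "a = y"; cases "b = y")
      assume "a = y" "b = y"
      then show ?thesis using y by (intro exI[of _ "[y]"]) auto
    next
      assume "a \<noteq> y" "b = y"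
      then obtain ws where "walk R ws" "hd ws = y" "last ws = a" "set ws \<subseteq> insert y (Domain F)"
        using walks a joined_sym[OF ab] by blast
      then show ?thesis using \<open>b = y\<close>
        by (intro exI[of _ "rev ws"]) (auto simp: walk_rev hd_rev last_rev)
    next
      assume "a \<noteq> y" "b \<noteq> y"
      then show ?thesis using walk_closedD[OF partial_liftD(5)[OF F], of a b] a b ab by blast
    qed (use walks b ab in blast)
  qed
qed

lemma partial_lift_extend_neighbour:
  assumes R: "is_cpx R" "\<not> has_cycle R" and "is_cpx E" "cpx_map R B g" "edge_lifting E B p"
    and F: "partial_lift R E p g F" and x: "(x, e) \<in> F" and y: "y \<notin> Domain F" "{x, y} \<in> simps R"
  shows "\<exists>e'. partial_lift R E p g (insert (y, e') F)"
proof -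
  have "g ` {x, y} \<in> simps B" using assms(4) y(2) unfolding cpx_map_def by blast
  moreover have "p e = g x" "e \<in> verts E" using partial_liftD(1,3)[OF F] x by auto
  ultimately obtain e' where e': "e' \<in> verts E" "p e' = g y" "{e, e'} \<in> simps E"
    using edge_liftingD[OF assms(5), of e "g y"] by auto
  have "y \<in> verts R" using cpx_simplex_verts[OF R(1) y(2)] by simp
  have xy: "joined R x y" using joined_in_simplex[OF R(1) y(2)] by simp
  have walk_from_x: "\<exists>ws. walk R ws \<and> hd ws = x \<and> last ws = b \<and> set ws \<subseteq> Domain F"
    if "b \<in> Domain F" "joined R y b" for b
    using walk_closedD[OF partial_liftD(5)[OF F]] x that joined_trans[OF xy] by blast
  have "partial_lift R E p g (insert (y, e') F)"
  proof (rule partial_lift_insert[OF F \<open>is_cpx E\<close> \<open>y \<in> verts R\<close> y(1) e'(1,2)])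
    fix z f assume zf: "(z, f) \<in> F" and yz: "{y, z} \<in> simps R"
    then obtain ws where ws: "walk R ws" "hd ws = x" "last ws = z" "set ws \<subseteq> Domain F"
      using walk_from_x joined_in_simplex[OF R(1) yz] by blast
    then have "x = z"
      using acyclic_common_neighbour[OF R ws(1), of y] y yz by (auto simp: insert_commute)
    then have "f = e" using partial_liftD(2)[OF F] x zf unfolding single_valued_def by blast
    then show "{e', f} \<in> simps E" using e'(3) by (simp add: insert_commute)
  next
    fix b assume "b \<in> Domain F" "joined R y b"
    then obtain ws where ws: "walk R ws" "hd ws = x" "last ws = b" "set ws \<subseteq> Domain F"
      using walk_from_x by blast
    then have "walk R (y # ws)" using \<open>y \<in> verts R\<close> y(2) by (cases ws) (auto simp: insert_commute)
    then show "\<exists>ws. walk R ws \<and> hd ws = y \<and> last ws = b \<and> set ws \<subseteq> insert y (Domain F)"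
      using ws by (intro exI[of _ "y # ws"]) auto
  qed
  then show ?thesis ..
qed

lemma partial_lift_extend_component:
  assumes "is_cpx R" "is_cpx E" "cpx_map R B g" "verts B \<subseteq> p ` verts E"
    and F: "partial_lift R E p g F" and v: "v \<in> verts R" "\<forall>d\<in>Domain F. \<not> joined R d v"
  shows "\<exists>e. partial_lift R E p g (insert (v, e) F)"
proof -
  have "g v \<in> verts B" using assms(3) v(1) unfolding cpx_map_def by blast
  then obtain e where e: "e \<in> verts E" "p e = g v" using assms(4) by auto
  have "v \<notin> Domain F" using v(2) joined_refl[OF v(1)] by blast
  have "partial_lift R E p g (insert (v, e) F)"
  proof (rule partial_lift_insert[OF F assms(2) v(1) \<open>v \<notin> Domain F\<close> e])
    fix z f assume zf: "(z, f) \<in> F" and vz: "{v, z} \<in> simps R"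
    have "joined R z v" using joined_in_simplex[OF assms(1) vz, of z v] by simp
    moreover have "z \<in> Domain F" using zf by blast
    ultimately show "{e, f} \<in> simps E" using v(2) by blast
  next
    fix b assume "b \<in> Domain F" "joined R v b"
    then show "\<exists>ws. walk R ws \<and> hd ws = v \<and> last ws = b \<and> set ws \<subseteq> insert v (Domain F)"
      using v(2) joined_sym[OF \<open>joined R v b\<close>] by blast
  qed
  then show ?thesis ..
qed

lemma partial_lift_extend:
  assumes "is_cpx R" "\<not> has_cycle R" "is_cpx E" "cpx_map R B g" "edge_lifting E B p"
    and "verts B \<subseteq> p ` verts E" and F: "partial_lift R E p g F"
    and v: "v \<in> verts R" "v \<notin> Domain F"
  shows "\<exists>y e. y \<notin> Domain F \<and> partial_lift R E p g (insert (y, e) F)"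
proof (cases "\<exists>d\<in>Domain F. joined R d v")
  case True
  then obtain ws where "walk R ws" "hd ws \<in> Domain F" "last ws = v"
    unfolding joined_def by blast
  then obtain x y where "x \<in> Domain F" "y \<notin> Domain F" "{x, y} \<in> simps R"
    using walk_exit_edge[of R ws "Domain F"] v(2) by blast
  then show ?thesis using partial_lift_extend_neighbour[OF assms(1-5) F] by blast
next
  case False
  then show ?thesis using partial_lift_extend_component[OF assms(1,3,4,6) F v(1)] v(2) by blast
qed

lemma partial_lift_total_map:
  assumes "refl_graph R" "is_cpx E" and F: "partial_lift R E p g F" "Domain F = verts R"
  shows "\<exists>h. cpx_map R E h \<and> (\<forall>(x, e)\<in>F. h x = e) \<and> (\<forall>v\<in>verts R. p (h v) = g v)"
proof -
  have R: "is_cpx R" using assms(1) unfolding refl_graph_def by blast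
  define h where "h x = (SOME e. (x, e) \<in> F)" for x
  have graph: "(x, h x) \<in> F" if "x \<in> verts R" for x
  proof -
    have "\<exists>e. (x, e) \<in> F" using F(2) that by blast
    then show ?thesis unfolding h_def by (rule someI_ex)
  qed
  have F_h: "h x = e" if "(x, e) \<in> F" for x e
  proof -
    have "x \<in> verts R" using partial_liftD(1)[OF F(1)] that by blast
    then show ?thesis using single_valuedD[OF partial_liftD(2)[OF F(1)] graph that] by simp
  qed
  have "h v \<in> verts E" if "v \<in> verts R" for v
    using partial_liftD(1)[OF F(1)] graph[OF that] by blast
  moreover have "h ` s \<in> simps E" if simplex: "s \<in> simps R" for s
  proof -
    obtain x y where s: "s = {x, y}" using refl_graph_simplex_pair[OF assms(1) simplex] by blast
    then have "x \<in> verts R" "y \<in> verts R" using cpx_simplex_verts[OF R simplex] by auto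
    then have "{h x, h y} \<in> simps E" using partial_liftD(4)[OF F(1) graph graph] simplex s by blast
    then show ?thesis using s by simp
  qed
  ultimately have "cpx_map R E h" using R assms(2) unfolding cpx_map_def by blast
  moreover have "p (h v) = g v" if "v \<in> verts R" for v
    using partial_liftD(3)[OF F(1) graph[OF that]] .
  ultimately show ?thesis using F_h by auto
qed

theorem acyclic_lift_extension:
  assumes "refl_graph R" "\<not> has_cycle R" "is_cpx E" "cpx_map R B g" "edge_lifting E B p"
    and "verts B \<subseteq> p ` verts E" and F0: "partial_lift R E p g F0"
  shows "\<exists>h. cpx_map R E h \<and> (\<forall>(x, e)\<in>F0. h x = e) \<and> (\<forall>v\<in>verts R. p (h v) = g v)"
proof -
  have R: "is_cpx R" using assms(1) unfolding refl_graph_def by blast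
  let ?A = "{F. partial_lift R E p g F \<and> F0 \<subseteq> F}"
  have "\<exists>M\<in>?A. \<forall>F\<in>?A. M \<subseteq> F \<longrightarrow> F = M"
  proof (rule subset_Zorn_nonempty)
    fix C assume "C \<noteq> {}" "subset.chain ?A C"
    then have lifts: "\<And>F. F \<in> C \<Longrightarrow> partial_lift R E p g F \<and> F0 \<subseteq> F"
      and chain: "\<forall>F\<in>C. \<forall>G\<in>C. F \<subseteq> G \<or> G \<subseteq> F"
      unfolding subset_chain_def by auto
    have "partial_lift R E p g (\<Union>C)" using partial_lift_Union[OF _ chain] lifts by blast
    moreover obtain F where "F \<in> C" using \<open>C \<noteq> {}\<close> by blast
    then have "F0 \<subseteq> \<Union>C" using lifts by blast
    ultimately show "\<Union>C \<in> ?A" by blast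
  qed (use F0 in blast)
  then obtain M where "M \<in> ?A" and M_max: "\<forall>F\<in>?A. M \<subseteq> F \<longrightarrow> F = M" ..
  then have M: "partial_lift R E p g M" "F0 \<subseteq> M" by simp_all
  have maximal: "F = M" if "partial_lift R E p g F" "M \<subseteq> F" for F
    using M_max M(2) that by (metis (mono_tags, lifting) mem_Collect_eq order_trans)
  have "Domain M = verts R"
  proof (rule ccontr)
    assume "Domain M \<noteq> verts R"
    then obtain v where "v \<in> verts R" "v \<notin> Domain M"
      using partial_liftD(1)[OF M(1)] by blast
    then obtain y e where "y \<notin> Domain M" "partial_lift R E p g (insert (y, e) M)"
      using partial_lift_extend[OF R assms(2-6) M(1)] by blast
    then show False using maximal[of "insert (y, e) M"] by blast
  qed
  then obtain h where h: "cpx_map R E h" "\<forall>(x, e)\<in>M. h x = e" "\<forall>v\<in>verts R. p (h v) = g v"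
    using partial_lift_total_map[OF assms(1,3) M(1)] by blast
  moreover have "\<forall>(x, e)\<in>F0. h x = e" using h(2) M(2) by auto
  ultimately show ?thesis by blast
qed

section \<open>Kan fibrations of \<open>Ex\<^sup>2 Sing\<close> lift edges\<close>

lemma cells_Ex: "cells (Ex X) n = {g. (\<forall>c\<in>chains n. g c \<in> cells X (length c - 1)) \<and>
                    (\<forall>c\<in>chains n. \<forall>k \<theta>. simp_op k (length c - 1) \<theta> \<longrightarrow>
                        g (map (\<lambda>j. c ! \<theta> j) [0..<Suc k]) = act X k (length c - 1) \<theta> (g c)) \<and>
                    (\<forall>c. c \<notin> chains n \<longrightarrow> g c = undefined)}"
  by (simp add: cells_def Ex_def)

lemma act_Ex: "act (Ex X) m n \<theta> g = (\<lambda>c. if c \<in> chains m then g (map (\<lambda>s. \<theta> ` s) c) else undefined)"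
  by (simp add: act_def Ex_def)

lemma cells_Sing: "cells (Sing K) n = {xs. length xs = Suc n \<and> set xs \<in> simps K}"
  by (simp add: cells_def Sing_def)

lemma act_Sing: "act (Sing K) m n \<theta> xs = map (\<lambda>j. xs ! \<theta> j) [0..<Suc m]"
  by (simp add: act_def Sing_def)

lemma cells_ExI:
  assumes "\<And>c. c \<in> chains n \<Longrightarrow> g c \<in> cells X (length c - 1)"
    and "\<And>c k \<theta>. c \<in> chains n \<Longrightarrow> simp_op k (length c - 1) \<theta> \<Longrightarrow>
          g (map (\<lambda>j. c ! \<theta> j) [0..<Suc k]) = act X k (length c - 1) \<theta> (g c)"
    and "\<And>c. c \<notin> chains n \<Longrightarrow> g c = undefined"
  shows "g \<in> cells (Ex X) n"
  using assms unfolding cells_Ex by blast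

lemma cells_ExD:
  assumes "g \<in> cells (Ex X) n"
  shows "\<And>c. c \<in> chains n \<Longrightarrow> g c \<in> cells X (length c - 1)"
    and "\<And>c k \<theta>. c \<in> chains n \<Longrightarrow> simp_op k (length c - 1) \<theta> \<Longrightarrow>
          g (map (\<lambda>j. c ! \<theta> j) [0..<Suc k]) = act X k (length c - 1) \<theta> (g c)"
    and "\<And>c. c \<notin> chains n \<Longrightarrow> g c = undefined"
  using assms unfolding cells_Ex by blast+

lemma chains_ne: "c \<in> chains n \<Longrightarrow> c \<noteq> []"
  unfolding chains_def by blast

lemma chains_set_subset: "d \<in> chains n \<Longrightarrow> s \<in> set d \<Longrightarrow> s \<subseteq> {0..n}"
  unfolding chains_def by blast

lemma chains_0_set: "c \<in> chains 0 \<Longrightarrow> s \<in> set c \<Longrightarrow> s = {0}"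
  unfolding chains_def by auto

lemma chains_0_imp_1: "c \<in> chains 0 \<Longrightarrow> c \<in> chains 1"
  unfolding chains_def by fastforce

lemma simp_op_nth_less: "simp_op k (length c - 1) \<theta> \<Longrightarrow> c \<noteq> [] \<Longrightarrow> j \<le> k \<Longrightarrow> \<theta> j < length c"
  unfolding simp_op_def by (metis One_nat_def Suc_pred length_greater_0_conv less_Suc_eq_le)

lemma chains_reindex:
  assumes c: "c \<in> chains n" and \<theta>: "simp_op k (length c - 1) \<theta>"
  shows "map (\<lambda>j. c ! \<theta> j) [0..<Suc k] \<in> chains n"
proof -
  have "c \<noteq> []" and sets: "\<forall>s\<in>set c. s \<noteq> {} \<and> s \<subseteq> {0..n}" and sorted: "sorted_wrt (\<subseteq>) c"
    using c unfolding chains_def by blast+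
  note less = simp_op_nth_less[OF \<theta> \<open>c \<noteq> []\<close>]
  have "\<forall>s\<in>set (map (\<lambda>j. c ! \<theta> j) [0..<Suc k]). s \<noteq> {} \<and> s \<subseteq> {0..n}"
    using less sets by auto
  moreover have "sorted_wrt (\<subseteq>) (map (\<lambda>j. c ! \<theta> j) [0..<Suc k])"
    unfolding sorted_wrt_iff_nth_less
  proof (intro allI impI)
    fix i j assume ij: "i < j" "j < length (map (\<lambda>j. c ! \<theta> j) [0..<Suc k])"
    then have "j \<le> k" "\<theta> i \<le> \<theta> j" using \<theta> unfolding simp_op_def by auto
    then have "c ! \<theta> i \<subseteq> c ! \<theta> j"
      using sorted_wrt_nth_less[OF sorted _ less] by (cases "\<theta> i = \<theta> j") auto
    then show "map (\<lambda>j. c ! \<theta> j) [0..<Suc k] ! i \<subseteq> map (\<lambda>j. c ! \<theta> j) [0..<Suc k] ! j"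
      using ij by (simp del: upt_Suc)
  qed
  ultimately show ?thesis unfolding chains_def by simp
qed

lemma chains_image:
  assumes d: "d \<in> chains m" and th: "simp_op m n \<theta>"
  shows "map (\<lambda>s. \<theta> ` s) d \<in> chains n"
proof -
  have dne: "d \<noteq> []" and ds: "\<forall>s\<in>set d. s \<noteq> {} \<and> s \<subseteq> {0..m}" and so: "sorted_wrt (\<subseteq>) d"
    using d unfolding chains_def by blast+
  have thn: "\<And>x. x \<le> m \<Longrightarrow> \<theta> x \<le> n" using th unfolding simp_op_def by blast
  have "\<forall>s\<in>set (map (\<lambda>s. \<theta> ` s) d). s \<noteq> {} \<and> s \<subseteq> {0..n}"
  proof
    fix s assume "s \<in> set (map (\<lambda>s. \<theta> ` s) d)"
    then obtain t where t: "t \<in> set d" and st: "s = \<theta> ` t" by auto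
    have "t \<noteq> {}" "t \<subseteq> {0..m}" using ds t by auto
    then show "s \<noteq> {} \<and> s \<subseteq> {0..n}" using st thn by auto
  qed
  moreover have "sorted_wrt (\<subseteq>) (map (\<lambda>s. \<theta> ` s) d)"
    using so unfolding sorted_wrt_map by (rule sorted_wrt_mono_rel[rotated]) blast
  ultimately show ?thesis using dne unfolding chains_def by simp
qed

lemma map_nth_replicate:
  "(\<And>j. j \<le> k \<Longrightarrow> \<theta> j < n) \<Longrightarrow> map (\<lambda>j. replicate n e ! \<theta> j) [0..<Suc k] = replicate (Suc k) e"
  by (intro nth_equalityI) (auto simp del: upt_Suc replicate_Suc simp add: less_Suc_eq_le)

text \<open>\<open>vertex_cell e\<close> and \<open>edge_cell b b'\<close> are the images of the simplices \<open>[e]\<close> and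
  \<open>[b, b']\<close> of \<open>Sing\<close> under the last-vertex map \<open>Sing \<Rightarrow> Ex Sing\<close> applied twice.\<close>

definition const_cell :: "nat \<Rightarrow> 'a \<Rightarrow> nat set list \<Rightarrow> 'a list" where
  "const_cell k e = (\<lambda>d. if d \<in> chains k then replicate (length d) e else undefined)"

definition vertex_cell :: "'a \<Rightarrow> nat set list \<Rightarrow> nat set list \<Rightarrow> 'a list" where
  "vertex_cell e = (\<lambda>c. if c \<in> chains 0 then const_cell (length c - 1) e else undefined)"

definition edge_vertex :: "'b \<Rightarrow> 'b \<Rightarrow> nat set list \<Rightarrow> nat set \<Rightarrow> 'b" where
  "edge_vertex b b' c s = (if \<exists>j\<in>s. 1 \<in> c ! j then b' else b)"

definition edge_cell :: "'b \<Rightarrow> 'b \<Rightarrow> nat set list \<Rightarrow> nat set list \<Rightarrow> 'b list" where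
  "edge_cell b b' = (\<lambda>c. if c \<in> chains 1
     then (\<lambda>d. if d \<in> chains (length c - 1) then map (edge_vertex b b' c) d else undefined)
     else undefined)"

lemma const_cell_cells:
  assumes "{e} \<in> simps E"
  shows "const_cell k e \<in> cells (Ex (Sing E)) k"
proof (rule cells_ExI)
  fix d assume "d \<in> chains k"
  then show "const_cell k e d \<in> cells (Sing E) (length d - 1)"
    using chains_ne[of d k] assms unfolding const_cell_def cells_Sing by simp
next
  fix d j \<theta> assume d: "d \<in> chains k" and \<theta>: "simp_op j (length d - 1) \<theta>"
  show "const_cell k e (map (\<lambda>i. d ! \<theta> i) [0..<Suc j]) =
      act (Sing E) j (length d - 1) \<theta> (const_cell k e d)"
    using chains_reindex[OF d \<theta>] d simp_op_nth_less[OF \<theta> chains_ne[OF d]]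
    unfolding const_cell_def act_Sing
    by (simp only: if_True map_nth_replicate length_map length_upt) simp
next
  fix d assume "d \<notin> chains k"
  then show "const_cell k e d = undefined" unfolding const_cell_def by simp
qed

lemma act_const_cell:
  assumes "simp_op k m \<theta>"
  shows "act (Ex (Sing E)) k m \<theta> (const_cell m e) = const_cell k e"
proof
  fix d
  show "act (Ex (Sing E)) k m \<theta> (const_cell m e) d = const_cell k e d"
    using chains_image[OF _ assms, of d] unfolding act_Ex const_cell_def by simp
qed

lemma vertex_cell_cells:
  assumes "{e} \<in> simps E"
  shows "vertex_cell e \<in> cells (Ex (Ex (Sing E))) 0"
proof (rule cells_ExI)
  fix c assume c: "c \<in> chains 0"
  show "vertex_cell e c \<in> cells (Ex (Sing E)) (length c - 1)"
    using c const_cell_cells[OF assms] unfolding vertex_cell_def by simp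
next
  fix c k \<theta> assume c: "c \<in> chains 0" and \<theta>: "simp_op k (length c - 1) \<theta>"
  have "vertex_cell e (map (\<lambda>j. c ! \<theta> j) [0..<Suc k]) = const_cell k e"
    using chains_reindex[OF c \<theta>] unfolding vertex_cell_def by (simp del: upt_Suc)
  also have "\<dots> = act (Ex (Sing E)) k (length c - 1) \<theta> (const_cell (length c - 1) e)"
    by (rule act_const_cell[OF \<theta>, symmetric])
  also have "\<dots> = act (Ex (Sing E)) k (length c - 1) \<theta> (vertex_cell e c)"
    using c unfolding vertex_cell_def by simp
  finally show "vertex_cell e (map (\<lambda>j. c ! \<theta> j) [0..<Suc k]) =
      act (Ex (Sing E)) k (length c - 1) \<theta> (vertex_cell e c)" .
next
  fix c assume "c \<notin> chains 0"
  then show "vertex_cell e c = undefined" unfolding vertex_cell_def by simp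
qed

lemma edge_cell_inner_cells:
  assumes "is_cpx B" "{b, b'} \<in> simps B"
  shows "(\<lambda>d. if d \<in> chains m then map (edge_vertex b b' c) d else undefined)
    \<in> cells (Ex (Sing B)) m"
proof (rule cells_ExI)
  fix d assume d: "d \<in> chains m"
  have "set (map (edge_vertex b b' c) d) \<subseteq> {b, b'}" unfolding edge_vertex_def by auto
  then have "set (map (edge_vertex b b' c) d) \<in> simps B"
    using cpx_simplex_subset[OF assms] chains_ne[OF d] by simp
  then show "(if d \<in> chains m then map (edge_vertex b b' c) d else undefined)
      \<in> cells (Sing B) (length d - 1)"
    using d chains_ne[OF d] unfolding cells_Sing by simp
next
  fix d j \<theta> assume d: "d \<in> chains m" and \<theta>: "simp_op j (length d - 1) \<theta>"
  have "map (edge_vertex b b' c) (map (\<lambda>i. d ! \<theta> i) [0..<Suc j]) =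
      map (\<lambda>i. map (edge_vertex b b' c) d ! \<theta> i) [0..<Suc j]"
    using simp_op_nth_less[OF \<theta> chains_ne[OF d]] by (simp del: upt_Suc)
  then show "(if map (\<lambda>i. d ! \<theta> i) [0..<Suc j] \<in> chains m
        then map (edge_vertex b b' c) (map (\<lambda>i. d ! \<theta> i) [0..<Suc j]) else undefined) =
      act (Sing B) j (length d - 1) \<theta>
        (if d \<in> chains m then map (edge_vertex b b' c) d else undefined)"
    using chains_reindex[OF d \<theta>] d unfolding act_Sing by (simp del: upt_Suc)
qed simp

lemma edge_vertex_reindex:
  assumes "s \<subseteq> {0..k}"
  shows "edge_vertex b b' (map (\<lambda>j. c ! \<theta> j) [0..<Suc k]) s = edge_vertex b b' c (\<theta> ` s)"
proof -
  have "map (\<lambda>j. c ! \<theta> j) [0..<Suc k] ! j = c ! \<theta> j" if "j \<in> s" for j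
    using assms that by (auto simp del: upt_Suc simp: nth_map_upt)
  then have "(\<exists>j\<in>s. 1 \<in> map (\<lambda>j. c ! \<theta> j) [0..<Suc k] ! j) \<longleftrightarrow> (\<exists>j\<in>\<theta> ` s. 1 \<in> c ! j)"
    by auto
  then show ?thesis unfolding edge_vertex_def by simp
qed

lemma edge_cell_cells:
  assumes "is_cpx B" "{b, b'} \<in> simps B"
  shows "edge_cell b b' \<in> cells (Ex (Ex (Sing B))) 1"
proof (rule cells_ExI)
  fix c assume "c \<in> chains 1"
  then show "edge_cell b b' c \<in> cells (Ex (Sing B)) (length c - 1)"
    using edge_cell_inner_cells[OF assms] unfolding edge_cell_def by simp
next
  fix c k \<theta> assume c: "c \<in> chains 1" and \<theta>: "simp_op k (length c - 1) \<theta>"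
  let ?c' = "map (\<lambda>j. c ! \<theta> j) [0..<Suc k]"
  show "edge_cell b b' ?c' = act (Ex (Sing B)) k (length c - 1) \<theta> (edge_cell b b' c)"
  proof
    fix d
    show "edge_cell b b' ?c' d = act (Ex (Sing B)) k (length c - 1) \<theta> (edge_cell b b' c) d"
    proof (cases "d \<in> chains k")
      case True
      have "edge_vertex b b' ?c' s = edge_vertex b b' c (\<theta> ` s)" if "s \<in> set d" for s
        by (rule edge_vertex_reindex[OF chains_set_subset[OF True that]])
      then have "map (edge_vertex b b' ?c') d = map (edge_vertex b b' c) (map ((`) \<theta>) d)"
        by (simp del: upt_Suc cong: map_cong)
      then show ?thesis
        using True chains_image[OF True \<theta>] chains_reindex[OF c \<theta>] c
        unfolding edge_cell_def act_Ex by (simp del: upt_Suc)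
    next
      case False
      then show ?thesis using chains_reindex[OF c \<theta>] c unfolding edge_cell_def act_Ex by simp
    qed
  qed
next
  fix c assume "c \<notin> chains 1"
  then show "edge_cell b b' c = undefined" unfolding edge_cell_def by simp
qed

lemma edge_vertex_chains_0:
  assumes "c \<in> chains 0" "s \<subseteq> {0..length c - 1}"
  shows "edge_vertex b b' c s = b"
proof -
  have "c ! j = {0}" if "j \<in> s" for j
  proof -
    have "j < length c" using assms(2) that chains_ne[OF assms(1)] by (cases c) auto
    then show ?thesis using chains_0_set[OF assms(1) nth_mem] by blast
  qed
  then show ?thesis unfolding edge_vertex_def by auto
qed

lemma face_edge_cell:
  assumes "p e = b"
  shows "face (Ex (Ex (Sing B))) 1 1 (edge_cell b b') =
    Ex_map (Ex_map (Sing_map p)) 0 (vertex_cell e)"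
proof
  fix c
  show "face (Ex (Ex (Sing B))) 1 1 (edge_cell b b') c =
      Ex_map (Ex_map (Sing_map p)) 0 (vertex_cell e) c"
  proof (cases "c \<in> chains 0")
    case True
    have "map (\<lambda>s. coface 1 ` s) c = c"
      using chains_0_set[OF True] by (intro map_idI) (auto simp: coface_def)
    then have "face (Ex (Ex (Sing B))) 1 1 (edge_cell b b') c = edge_cell b b' c"
      using True unfolding face_def act_Ex by simp
    also have "\<dots> = Ex_map (Sing_map p) (length c - 1) (const_cell (length c - 1) e)"
    proof
      fix d
      have "map (edge_vertex b b' c) d = replicate (length d) b" if "d \<in> chains (length c - 1)"
        using edge_vertex_chains_0[OF True chains_set_subset[OF that]] map_replicate_const[of b d]
        by (metis (no_types, lifting) map_cong)
      then show "edge_cell b b' c d =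
          Ex_map (Sing_map p) (length c - 1) (const_cell (length c - 1) e) d"
        using chains_0_imp_1[OF True] assms
        unfolding edge_cell_def Ex_map_def Sing_map_def const_cell_def by simp
    qed
    also have "\<dots> = Ex_map (Ex_map (Sing_map p)) 0 (vertex_cell e) c"
      using True unfolding Ex_map_def[of "Ex_map (Sing_map p)" 0] vertex_cell_def by simp
    finally show ?thesis .
  next
    case False
    then show ?thesis unfolding face_def act_Ex Ex_map_def by simp
  qed
qed

text \<open>\<open>[{0}, {0, 1}]\<close> is the 1-simplex of the subdivided 1-simplex that runs from the vertex 0
  to the barycentre; evaluating a 1-cell of \<open>Ex\<^sup>2 Sing E\<close> on it twice gives an edge of \<open>E\<close>.\<close>
lemma Ex2_Sing_cell_edge:
  assumes z: "z \<in> cells (Ex (Ex (Sing E))) 1"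
  shows "\<exists>e1 e2. z [{0}, {0, 1}] [{0}, {0, 1}] = [e1, e2] \<and> {e1, e2} \<in> simps E \<and>
    z [{0}] [{0}] = [e1]"
proof -
  define c :: "nat set list" where "c = [{0}, {0, 1}]"
  have c: "c \<in> chains 1" "length c - 1 = 1" "[{0}] \<in> chains 0" unfolding c_def chains_def by auto
  have zc: "z c \<in> cells (Ex (Sing E)) 1" using cells_ExD(1)[OF z c(1)] c(2) by simp
  then have "z c c \<in> cells (Sing E) 1" using cells_ExD(1)[OF _ c(1)] c(2) by fastforce
  then obtain e1 e2 where zcc: "z c c = [e1, e2]" "{e1, e2} \<in> simps E"
    unfolding cells_Sing by (auto simp: length_Suc_conv numeral_2_eq_2)
  have const0: "simp_op 0 1 (\<lambda>_. 0)" unfolding simp_op_def by simp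
  have "z [{0}] = act (Ex (Sing E)) 0 1 (\<lambda>_. 0) (z c)"
    using cells_ExD(2)[OF z c(1), of 0 "\<lambda>_. 0"] const0 c(2) unfolding c_def by simp
  then have "z [{0}] [{0}] = z c [{0}]" using c(3) unfolding act_Ex by simp
  also have "\<dots> = act (Sing E) 0 1 (\<lambda>_. 0) (z c c)"
    using cells_ExD(2)[OF zc c(1), of 0 "\<lambda>_. 0"] const0 c(2) unfolding c_def by simp
  also have "\<dots> = [e1]" using zcc unfolding act_Sing by simp
  finally show ?thesis using zcc unfolding c_def by blast
qed

lemma kan_fibration_edge_lifting:
  assumes kan: "kan_fibration (Ex (Ex (Sing E))) (Ex (Ex (Sing B))) (Ex_map (Ex_map (Sing_map p)))"
    and "is_cpx E" "is_cpx B"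
  shows "edge_lifting E B p"
  unfolding edge_lifting_def
proof (intro ballI allI impI)
  fix e b' assume e: "e \<in> verts E" and edge: "{p e, b'} \<in> simps B"
  let ?X = "Ex (Ex (Sing E))" and ?Y = "Ex (Ex (Sing B))" and ?p = "Ex_map (Ex_map (Sing_map p))"
  have "vertex_cell e \<in> cells ?X 0"
    by (rule vertex_cell_cells[OF cpx_vertex_simplex[OF assms(2) e]])
  moreover have "edge_cell (p e) b' \<in> cells ?Y 1" by (rule edge_cell_cells[OF assms(3) edge])
  moreover have "face ?Y 1 1 (edge_cell (p e) b') = ?p 0 (vertex_cell e)"
    by (rule face_edge_cell) simp
  \<comment> \<open>the horn \<open>\<Lambda>\<^sup>1\<^sub>0\<close> consists of the single face \<open>d\<^sub>1 = vertex_cell e\<close>\<close>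
  ultimately obtain z where z: "z \<in> cells ?X 1" "?p 1 z = edge_cell (p e) b'"
    and face_z: "face ?X 1 1 z = vertex_cell e"
    using conjunct2[OF kan[unfolded kan_fibration_def], rule_format, of 1 0 "\<lambda>_. vertex_cell e"]
    by (auto simp: le_Suc_eq)
  obtain e1 e2 where e12: "z [{0}, {0, 1}] [{0}, {0, 1}] = [e1, e2]" "{e1, e2} \<in> simps E"
    and "z [{0}] [{0}] = [e1]"
    using Ex2_Sing_cell_edge[OF z(1)] by blast
  moreover have "[{0}] \<in> chains 0" unfolding chains_def by auto
  ultimately have "e1 = e"
    using arg_cong[OF face_z, of "\<lambda>z. z [{0}] [{0}]"]
    unfolding face_def act_Ex coface_def vertex_cell_def const_cell_def by simp
  have "[{0}, {0, 1}] \<in> chains 1" unfolding chains_def by auto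
  then have "map p [e1, e2] = map (edge_vertex (p e) b' [{0}, {0, 1}]) [{0}, {0, 1}]"
    using arg_cong[OF z(2), of "\<lambda>z. z [{0}, {0, 1}] [{0}, {0, 1}]"] e12(1)
    unfolding Ex_map_def Sing_map_def edge_cell_def by simp
  then have "p e2 = b'" unfolding edge_vertex_def by simp
  moreover have "e2 \<in> verts E" using cpx_simplex_verts[OF assms(2) e12(2)] by simp
  ultimately show "\<exists>e'\<in>verts E. p e' = b' \<and> {e, e'} \<in> simps E"
    using e12(2) \<open>e1 = e\<close> by blast
qed

section \<open>Weak equivalences are surjective on components\<close>

lemma openin_realize: "openin (realize X) = real_open X"
  unfolding realize_def by (rule topology_inverse'[OF istopology_real_open])

lemma real_rel_class_in_carrier:
  "x \<in> cells X n \<Longrightarrow> t \<in> std_simplex n \<Longrightarrow> real_rel X `` {(n, x, t)} \<in> real_carrier X"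
  unfolding real_carrier_def real_pts_def by (rule quotientI) simp

lemma real_carrier_saturated_iff:
  assumes sat: "\<And>a c. (a, c) \<in> real_rel X \<Longrightarrow> W a \<longleftrightarrow> W c"
    and P: "P \<in> real_carrier X" and pt: "pt \<in> P"
  shows "(\<exists>pt'\<in>P. W pt') \<longleftrightarrow> W pt"
proof -
  obtain a where "P = real_rel X `` {a}" using P unfolding real_carrier_def by (rule quotientE)
  then show ?thesis using pt sat by blast
qed

lemma real_carrier_nonempty: "P \<in> real_carrier X \<Longrightarrow> P \<noteq> {}"
  unfolding real_carrier_def real_rel_def by (auto elim!: quotientE)

lemma real_open_saturated:
  assumes sat: "\<And>a c. (a, c) \<in> real_rel X \<Longrightarrow> W a \<longleftrightarrow> W c"
    and indep: "\<And>n x t t'. W (n, x, t) \<longleftrightarrow> W (n, x, t')"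
  shows "real_open X {P \<in> real_carrier X. \<exists>pt\<in>P. W pt}"
  unfolding real_open_def
proof (intro conjI allI ballI)
  fix n x assume x: "x \<in> cells X n"
  have "real_rel X `` {(n, x, t)} \<in> {P \<in> real_carrier X. \<exists>pt\<in>P. W pt} \<longleftrightarrow> W (n, x, t)"
    if t: "t \<in> std_simplex n" for t
  proof -
    have "(n, x, t) \<in> real_rel X `` {(n, x, t)}" unfolding real_rel_def by blast
    then show ?thesis
      using real_carrier_saturated_iff[of X W, OF sat real_rel_class_in_carrier[OF x t]]
        real_rel_class_in_carrier[OF x t] by blast
  qed
  then have eq: "{t \<in> std_simplex n.
      real_rel X `` {(n, x, t)} \<in> {P \<in> real_carrier X. \<exists>pt\<in>P. W pt}} =
      {t \<in> std_simplex n. W (n, x, t)}"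
    by blast
  have "openin (subtopology (powertop_real UNIV) (std_simplex n)) (std_simplex n)"
    using openin_topspace[of "subtopology (powertop_real UNIV) (std_simplex n)"] by simp
  consider "{t \<in> std_simplex n. W (n, x, t)} = {}"
    | "{t \<in> std_simplex n. W (n, x, t)} = std_simplex n"
    using indep by blast
  then show "openin (subtopology (powertop_real UNIV) (std_simplex n))
      {t \<in> std_simplex n. real_rel X `` {(n, x, t)} \<in> {P \<in> real_carrier X. \<exists>pt\<in>P. W pt}}"
    unfolding eq by cases (simp_all only: openin_empty \<open>openin _ (std_simplex n)\<close>)
qed blast

lemma topspace_realize: "topspace (realize X) = real_carrier X"
proof -
  have carrier: "real_carrier X = {P \<in> real_carrier X. \<exists>pt\<in>P. True}"
    using real_carrier_nonempty by blast
  have "real_open X (real_carrier X)" by (subst carrier) (rule real_open_saturated; simp)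
  moreover have "S \<subseteq> real_carrier X" if "real_open X S" for S
    using that unfolding real_open_def by blast
  moreover have "topspace (realize X) = \<Union>{S. real_open X S}"
    unfolding topspace_def openin_realize by simp
  ultimately show ?thesis by blast
qed

lemma realize_saturated_clopen:
  assumes sat: "\<And>a c. (a, c) \<in> real_rel X \<Longrightarrow> W a \<longleftrightarrow> W c"
    and indep: "\<And>n x t t'. W (n, x, t) \<longleftrightarrow> W (n, x, t')"
  shows "openin (realize X) {P \<in> real_carrier X. \<exists>pt\<in>P. W pt}"
    and "closedin (realize X) {P \<in> real_carrier X. \<exists>pt\<in>P. W pt}"
proof -
  show "openin (realize X) {P \<in> real_carrier X. \<exists>pt\<in>P. W pt}"
    unfolding openin_realize using real_open_saturated[of X W, OF sat indep] .
  have "real_open X {P \<in> real_carrier X. \<exists>pt\<in>P. \<not> W pt}"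
    using real_open_saturated[of X "\<lambda>pt. \<not> W pt"] sat indep by blast
  moreover have "(\<exists>pt\<in>P. \<not> W pt) \<longleftrightarrow> \<not> (\<exists>pt\<in>P. W pt)" if P: "P \<in> real_carrier X" for P
  proof -
    obtain pt where "pt \<in> P" using real_carrier_nonempty[OF P] by blast
    then show ?thesis
      using real_carrier_saturated_iff[of X W, OF sat P]
        real_carrier_saturated_iff[of X "Not \<circ> W", OF _ P] sat by auto
  qed
  then have "{P \<in> real_carrier X. \<exists>pt\<in>P. \<not> W pt} =
      real_carrier X - {P \<in> real_carrier X. \<exists>pt\<in>P. W pt}"
    by blast
  ultimately show "closedin (realize X) {P \<in> real_carrier X. \<exists>pt\<in>P. W pt}"
    unfolding closedin_def topspace_realize openin_realize by auto
qed

definition meets_component ::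
    "'b cpx \<Rightarrow> 'b \<Rightarrow> ('a \<Rightarrow> 'b) \<Rightarrow> nat \<times> 'a list \<times> (nat \<Rightarrow> real) \<Rightarrow> bool" where
  "meets_component B b q = (\<lambda>(n, xs, t). \<exists>v\<in>set xs. joined B b (q v))"

lemma real_gen_Sing_meets_component:
  assumes q: "cpx_map K B q" and ac: "(a, c) \<in> real_gen (Sing K)"
  shows "meets_component B b q a \<longleftrightarrow> meets_component B b q c"
proof -
  obtain m n \<theta> x t where a: "a = (m, act (Sing K) m n \<theta> x, t)" and c: "c = (n, x, push m \<theta> t)"
    and \<theta>: "simp_op m n \<theta>" and x: "x \<in> cells (Sing K) n"
    using ac unfolding real_gen_def by blast
  have "length x = Suc n" "set x \<in> simps K" using x unfolding cells_Sing by auto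
  then have "\<theta> i < length x" if "i \<le> m" for i using \<theta> that unfolding simp_op_def by auto
  then have face: "set (act (Sing K) m n \<theta> x) \<subseteq> set x"
      "x ! \<theta> 0 \<in> set (act (Sing K) m n \<theta> x)"
    unfolding act_Sing by (auto simp del: upt_Suc simp: less_Suc_eq_le)
  have "q ` set x \<in> simps B" "is_cpx B" using q \<open>set x \<in> simps K\<close> unfolding cpx_map_def by auto
  moreover have "x ! \<theta> 0 \<in> set x" using face by blast
  ultimately have edge: "joined B (q v) (q (x ! \<theta> 0))" if "v \<in> set x" for v
    using joined_in_simplex[of B "q ` set x"] that by blast
  have "(\<exists>v\<in>set (act (Sing K) m n \<theta> x). joined B b (q v)) \<longleftrightarrow> (\<exists>v\<in>set x. joined B b (q v))"
  proof
    assume "\<exists>v\<in>set x. joined B b (q v)"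
    then obtain v where v: "v \<in> set x" "joined B b (q v)" by blast
    then have "joined B b (q (x ! \<theta> 0))" using joined_trans[OF v(2) edge[OF v(1)]] by blast
    then show "\<exists>v\<in>set (act (Sing K) m n \<theta> x). joined B b (q v)" using face(2) by blast
  qed (use face(1) in blast)
  then show ?thesis unfolding meets_component_def a c by simp
qed

lemma real_rel_Sing_meets_component:
  assumes q: "cpx_map K B q" and ac: "(a, c) \<in> real_rel (Sing K)"
  shows "meets_component B b q a \<longleftrightarrow> meets_component B b q c"
  using ac unfolding real_rel_def
proof (induction rule: rtrancl_induct)
  case (step y z)
  have "meets_component B b q y \<longleftrightarrow> meets_component B b q z"
    using step.hyps(2) real_gen_Sing_meets_component[OF q] by (elim UnE) auto
  then show ?case using step.IH by simp
qed simp

lemma realize_Sing_meets_component: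
  assumes "cpx_map K B q" "P \<in> real_carrier (Sing K)" "pt \<in> P" "meets_component B b q pt"
  shows "\<exists>v\<in>verts K. joined B b (q v)"
proof -
  obtain a where a: "a \<in> real_pts (Sing K)" "P = real_rel (Sing K) `` {a}"
    using assms(2) unfolding real_carrier_def by (rule quotientE)
  then have "meets_component B b q a"
    using real_rel_Sing_meets_component[OF assms(1)] assms(3,4) by blast
  moreover obtain n xs t where "a = (n, xs, t)" "set xs \<in> simps K"
    using a(1) unfolding real_pts_def cells_Sing by blast
  moreover have "is_cpx K" using assms(1) unfolding cpx_map_def by blast
  ultimately show ?thesis unfolding meets_component_def using cpx_simplex_verts by fastforce
qed

lemma weak_homotopy_equivalence_joined:
  assumes weq: "weak_homotopy_equivalence (realize (Sing E)) (realize (Sing B))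
      (realize_map (Sing B) (Sing_map p))"
    and p: "cpx_map E B p" and b: "b \<in> verts B"
  shows "\<exists>v\<in>verts E. joined B b (p v)"
proof -
  have "is_cpx B" using p unfolding cpx_map_def by blast
  then have id: "cpx_map B B id" unfolding cpx_map_def by simp
  let ?W = "meets_component B b id"
  let ?U = "{P \<in> real_carrier (Sing B). \<exists>pt\<in>P. ?W pt}"
  have sat: "?W a \<longleftrightarrow> ?W c" if "(a, c) \<in> real_rel (Sing B)" for a c
    using real_rel_Sing_meets_component[OF id that] .
  have clopen: "openin (realize (Sing B)) ?U" "closedin (realize (Sing B)) ?U"
    using realize_saturated_clopen[of "Sing B" ?W] sat unfolding meets_component_def by auto
  define t0 :: "nat \<Rightarrow> real" where "t0 i = (if i = 0 then 1 else 0)" for i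
  have b_cell: "[b] \<in> cells (Sing B) 0" "t0 \<in> std_simplex 0"
    using cpx_vertex_simplex[OF \<open>is_cpx B\<close> b] unfolding cells_Sing std_simplex_def t0_def by auto
  let ?y = "real_rel (Sing B) `` {(0, [b], t0)}"
  have "(0, [b], t0) \<in> ?y" unfolding real_rel_def by blast
  moreover have "?W (0, [b], t0)" unfolding meets_component_def using joined_refl[OF b] by simp
  ultimately have y: "?y \<in> topspace (realize (Sing B))" "?y \<in> ?U"
    using real_rel_class_in_carrier[OF b_cell] unfolding topspace_realize by blast+
  have "\<forall>y\<in>topspace (realize (Sing B)). \<exists>x\<in>topspace (realize (Sing E)).
      path_component_of (realize (Sing B)) (realize_map (Sing B) (Sing_map p) x) y"
    using conjunct1[OF conjunct2[OF weq[unfolded weak_homotopy_equivalence_def]]] .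
  then obtain x where x: "x \<in> topspace (realize (Sing E))"
    and path: "path_component_of (realize (Sing B)) (realize_map (Sing B) (Sing_map p) x) ?y"
    using y(1) by blast
  have "quasi_component_of (realize (Sing B)) (realize_map (Sing B) (Sing_map p) x) ?y"
    by (rule path_imp_quasi_component_of[OF path])
  then have "realize_map (Sing B) (Sing_map p) x \<in> ?U"
    using clopen y(2) unfolding quasi_component_of_def by blast
  then obtain n xs t pt where "(n, xs, t) \<in> x"
    and "pt \<in> real_rel (Sing B) `` {(n, Sing_map p n xs, t)}" "?W pt"
    unfolding realize_map_def by blast
  then have "?W (n, Sing_map p n xs, t)" using sat[of "(n, Sing_map p n xs, t)" pt] by blast
  then have "meets_component B b p (n, xs, t)"
    unfolding Sing_map_def meets_component_def by simp
  then show ?thesis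
    using realize_Sing_meets_component[OF p] x \<open>(n, xs, t) \<in> x\<close> unfolding topspace_realize by blast
qed

section \<open>Trivial fibrations and forests\<close>

lemma thomason_trivial_fib_lifting:
  assumes "thomason_trivial_fib E B p"
  shows "cpx_map E B p" "edge_lifting E B p" "verts B \<subseteq> p ` verts E"
proof -
  show p: "cpx_map E B p"
    using assms unfolding thomason_trivial_fib_def thomason_fib_def by blast
  then have "is_cpx E" "is_cpx B" unfolding cpx_map_def by blast+
  moreover have "kan_fibration (Ex (Ex (Sing E))) (Ex (Ex (Sing B))) (Ex_map (Ex_map (Sing_map p)))"
    using assms unfolding thomason_trivial_fib_def thomason_fib_def by blast
  ultimately show lifting: "edge_lifting E B p" using kan_fibration_edge_lifting by blast
  have weq: "weak_homotopy_equivalence (realize (Sing E)) (realize (Sing B))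
      (realize_map (Sing B) (Sing_map p))"
    using assms unfolding thomason_trivial_fib_def thomason_weq_def sset_weq_def by blast
  show "verts B \<subseteq> p ` verts E"
  proof
    fix b assume "b \<in> verts B"
    then obtain v where "v \<in> verts E" "joined B b (p v)"
      using weak_homotopy_equivalence_joined[OF weq p] by blast
    then show "b \<in> p ` verts E" using edge_lifting_joined[OF lifting _ joined_sym] by blast
  qed
qed

lemma subcomplex_graph_partial_lift:
  assumes S: "subcomplex S R" "walk_closed R (verts S)"
    and full: "\<And>a b. a \<in> verts S \<Longrightarrow> b \<in> verts S \<Longrightarrow> {a, b} \<in> simps R \<Longrightarrow> {a, b} \<in> simps S"
    and u: "cpx_map S E u" "\<forall>v\<in>verts S. p (u v) = g v"
  shows "partial_lift R E p g ((\<lambda>v. (v, u v)) ` verts S)"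
proof (rule partial_liftI)
  show "(\<lambda>v. (v, u v)) ` verts S \<subseteq> verts R \<times> verts E"
    using S(1) u(1) unfolding subcomplex_def cpx_map_def by blast
  show "single_valued ((\<lambda>v. (v, u v)) ` verts S)" unfolding single_valued_def by blast
  show "p e = g x" if "(x, e) \<in> (\<lambda>v. (v, u v)) ` verts S" for x e
    using that u(2) by blast
  show "{e, e'} \<in> simps E"
    if "(x, e) \<in> (\<lambda>v. (v, u v)) ` verts S" "(y, e') \<in> (\<lambda>v. (v, u v)) ` verts S"
      and "{x, y} \<in> simps R"
    for x e y e'
  proof -
    have "x \<in> verts S" "y \<in> verts S" "e = u x" "e' = u y" using that(1,2) by auto
    then have "u ` {x, y} \<in> simps E" using full that(3) u(1) unfolding cpx_map_def by blast
    then show ?thesis using \<open>e = u x\<close> \<open>e' = u y\<close> by simp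
  qed
  have "Domain ((\<lambda>v. (v, u v)) ` verts S) = verts S" by force
  then show "walk_closed R (Domain ((\<lambda>v. (v, u v)) ` verts S))" using S(2) by simp
qed

lemma forest_subcomplex_has_llp:
  assumes R: "forest R" and S: "subcomplex S R" "walk_closed R (verts S)"
    and full: "\<And>a b. a \<in> verts S \<Longrightarrow> b \<in> verts S \<Longrightarrow> {a, b} \<in> simps R \<Longrightarrow> {a, b} \<in> simps S"
    and p: "cpx_map E B p" "edge_lifting E B p" "verts B \<subseteq> p ` verts E"
  shows "has_llp S R id E B p"
  unfolding has_llp_def
proof (intro allI impI)
  fix u g assume u: "cpx_map S E u" and g: "cpx_map R B g" and "\<forall>v\<in>verts S. p (u v) = g (id v)"
  then have "partial_lift R E p g ((\<lambda>v. (v, u v)) ` verts S)"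
    using subcomplex_graph_partial_lift[OF S full u] by simp
  moreover have "refl_graph R" "\<not> has_cycle R" using R unfolding forest_def by blast+
  moreover have "is_cpx E" using p(1) unfolding cpx_map_def by blast
  ultimately obtain h where "cpx_map R E h" "\<forall>(x, e)\<in>(\<lambda>v. (v, u v)) ` verts S. h x = e"
      "\<forall>v\<in>verts R. p (h v) = g v"
    using acyclic_lift_extension[OF _ _ _ g p(2,3)] by blast
  then show "\<exists>h. cpx_map R E h \<and> (\<forall>v\<in>verts S. h (id v) = u v) \<and>
      (\<forall>v\<in>verts R. p (h v) = g v)"
    by auto
qed

lemma connected_subcomplex_walk_closed:
  assumes "connected_cpx S" "subcomplex S R"
  shows "walk_closed R (verts S)"
  unfolding walk_closed_def
proof (intro ballI impI)
  fix a b assume "a \<in> verts S" "b \<in> verts S"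
  then obtain ws where "walk S ws" "hd ws = a" "last ws = b"
    using assms(1) unfolding connected_cpx_def by blast
  moreover note walk_mono[OF \<open>walk S ws\<close> assms(2)] walk_verts[OF \<open>walk S ws\<close>]
  ultimately show "\<exists>ws. walk R ws \<and> hd ws = a \<and> last ws = b \<and> set ws \<subseteq> verts S" by blast
qed

theorem corollary6p8:
  fixes T :: "'a cpx" and S R :: "'b cpx"
  shows "(forest T \<longrightarrow>
            (\<forall>(E :: 'c cpx) (B :: 'd cpx) p. thomason_trivial_fib E B p \<longrightarrow>
               has_llp (empty_cpx :: 'a cpx) T id E B p))
       \<and> (tree S \<and> tree R \<and> subcomplex S R \<longrightarrow>
            (\<forall>(E :: 'c cpx) (B :: 'd cpx) p. thomason_trivial_fib E B p \<longrightarrow>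
               has_llp S R id E B p))"
proof (intro conjI impI allI)
  fix E :: "'c cpx" and B :: "'d cpx" and p
  assume p: "thomason_trivial_fib E B p"
  note lifting = thomason_trivial_fib_lifting[OF p]
  {
    assume T: "forest T"
    have "is_cpx (empty_cpx :: 'a cpx)"
      unfolding is_cpx_def empty_cpx_def verts_def simps_def by simp
    moreover have "is_cpx T" using T unfolding forest_def refl_graph_def by blast
    ultimately have "subcomplex empty_cpx T"
      unfolding subcomplex_def empty_cpx_def verts_def simps_def by simp
    moreover have "verts (empty_cpx :: 'a cpx) = {}" unfolding empty_cpx_def verts_def by simp
    ultimately show "has_llp (empty_cpx :: 'a cpx) T id E B p"
      by (intro forest_subcomplex_has_llp[OF T _ _ _ lifting]) (simp_all add: walk_closed_def)
  next
    assume "tree S \<and> tree R \<and> subcomplex S R"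
    then have S: "connected_cpx S" "subcomplex S R" and R: "forest R" "\<not> has_cycle R"
      unfolding tree_def forest_def by blast+
    show "has_llp S R id E B p"
    proof (rule forest_subcomplex_has_llp[OF R(1) S(2) _ _ lifting])
      show "walk_closed R (verts S)" by (rule connected_subcomplex_walk_closed[OF S])
      show "{a, b} \<in> simps S" if "a \<in> verts S" "b \<in> verts S" "{a, b} \<in> simps R" for a b
        using connected_subcomplex_edge[OF S R(2) that] .
    qed
  }
qed

end
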